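(* Let $\widehat Q_\sigma$ be a component of the multivariate extension $\widehat Q$ of a query $Q$. There exists an optimal tree decomposition of $\widehat Q_\sigma$ (i.e., one whose width equals $\mathsf{w}(\widehat Q_\sigma)$) in which every bag is $Z$-prefix-closed.
   Context: A query is a full conjunctive query $Q = R_1(\mathbf X_1)\wedge\cdots\wedge R_k(\mathbf X_k)$. Multivariate extension: take fresh variables $Z_1,\dots,Z_k$; for a permutation $\sigma$ of $[k]$, the component $\widehat Q_\sigma$ replaces each atom $R_{\sigma_i}(\mathbf X_{\sigma_i})$ by $\widehat R_{\sigma_i}(Z_1,\dots,Z_i,\mathbf X_{\sigma_i})$. A set of variables $\mathbf Y$ of $\widehat Q_\sigma$ is $Z$-prefix-closed if for every $Z_i\in\mathbf Y$ we have $\{Z_1,\dots,Z_{i-1}\}\subseteq\mathbf Y$. Tree decomposition of a query $P$: a tree with bags of variables such that every atom schema is contained in some bag and the bags containing any variable form a connected subtree; its width is the maximum over bags $B$ of the fractional edge cover number of $P$ restricted to $B$ (each atom schema intersected with $B$); $\mathsf{w}(P)$ is the minimum width over all tree decompositions. *)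

theory Defs
  imports Complex_Main "HOL-Library.Extended_Real" "HOL-Combinatorics.Permutations"
begin

text \<open>A (full conjunctive) query is represented by the list of the variable
schemas of its atoms, in order. Relation names play no role for tree
decompositions, widths or prefix-closedness, so only the schemas are kept.\<close>

type_synonym 'v query = "'v set list"

text \<open>Variables of the extension are 'v + nat:
Inl x is an original variable x, Inr i is the fresh variable Z_(i+1)
(0-based indexing).\<close>

definition mv_component :: "'v query \<Rightarrow> (nat \<Rightarrow> nat) \<Rightarrow> ('v + nat) query" where
  "mv_component Q \<sigma> = map (\<lambda>i. Inr ` {..i} \<union> Inl ` (Q ! \<sigma> i)) [0..<length Q]"

definition z_prefix_closed :: "('v + nat) set \<Rightarrow> bool" where
  "z_prefix_closed Y \<longleftrightarrow> (\<forall>i. Inr i \<in> Y \<longrightarrow> (\<forall>j<i. Inr j \<in> Y))"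

definition adj_within :: "nat set set \<Rightarrow> nat set \<Rightarrow> (nat \<times> nat) set" where
  "adj_within E S = {(a, b). {a, b} \<in> E \<and> a \<in> S \<and> b \<in> S}"

definition connected_in :: "nat set set \<Rightarrow> nat set \<Rightarrow> bool" where
  "connected_in E S \<longleftrightarrow> (\<forall>a\<in>S. \<forall>b\<in>S. (a, b) \<in> (adj_within E S)\<^sup>*)"

definition is_tree :: "nat set \<Rightarrow> nat set set \<Rightarrow> bool" where
  "is_tree N E \<longleftrightarrow> finite N \<and> N \<noteq> {} \<and> (\<forall>e\<in>E. e \<subseteq> N \<and> card e = 2)
     \<and> connected_in E N \<and> card E + 1 = card N"

definition is_tree_decomp :: "'a query \<Rightarrow> nat set \<Rightarrow> nat set set \<Rightarrow> (nat \<Rightarrow> 'a set) \<Rightarrow> bool" where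
  "is_tree_decomp P N E bag \<longleftrightarrow> is_tree N E
     \<and> (\<forall>S\<in>set P. \<exists>t\<in>N. S \<subseteq> bag t)
     \<and> (\<forall>x. connected_in E {t\<in>N. x \<in> bag t})"

text \<open>Fractional edge cover number of P restricted to B (atoms S_j intersected
with B); infeasible covers give infinity.\<close>

definition frac_edge_cover :: "'a query \<Rightarrow> 'a set \<Rightarrow> ereal" where
  "frac_edge_cover P B = Inf {ereal (\<Sum>j<length P. w j) | w.
      (\<forall>j. w j \<ge> 0) \<and> (\<forall>v\<in>B. (\<Sum>j | j < length P \<and> v \<in> P ! j \<inter> B. w j) \<ge> 1)}"

definition td_width :: "'a query \<Rightarrow> nat set \<Rightarrow> (nat \<Rightarrow> 'a set) \<Rightarrow> ereal" where
  "td_width P N bag = (SUP t\<in>N. frac_edge_cover P (bag t))"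

definition tw :: "'a query \<Rightarrow> ereal" where
  "tw P = Inf {td_width P N bag | N E bag. is_tree_decomp P N E bag}"

end

theory Submission
  imports Defs
begin

text \<open>Call a variable x dominated by y if every atom containing y also contains x.
Adding to a bag all variables dominated by some variable of the bag (and dropping
variables occurring in no atom) keeps a tree decomposition valid: the new subtree of x
is the union of the subtrees of the variables dominating it, each of which meets the
subtree of x in a bag covering a common atom. It also cannot increase the fractional
edge cover number, because the covering constraint of a dominated variable is implied
by that of its dominator. In a component of the multivariate extension Z_i lies in the
atoms at positions i, i+1, ..., so Z_i dominates Z_1, ..., Z_(i-1); hence closing the
bags of an optimal decomposition (one exists since widths take finitely many values)
makes every bag Z-prefix-closed.\<close>

definition incident_atoms :: "'a query \<Rightarrow> 'a \<Rightarrow> nat set" where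
  "incident_atoms P x = {j. j < length P \<and> x \<in> P ! j}"

definition domination_closure :: "'a query \<Rightarrow> 'a set \<Rightarrow> 'a set" where
  "domination_closure P B =
     {x. \<exists>y\<in>B. incident_atoms P y \<noteq> {} \<and> incident_atoms P y \<subseteq> incident_atoms P x}"

lemma finite_incident_atoms [simp]: "finite (incident_atoms P x)"
  unfolding incident_atoms_def by simp

lemma frac_edge_cover_incident_atoms:
  "frac_edge_cover P B = Inf {ereal (\<Sum>j<length P. w j) | w.
      (\<forall>j. w j \<ge> 0) \<and> (\<forall>v\<in>B. (\<Sum>j\<in>incident_atoms P v. w j) \<ge> 1)}"
proof -
  have "{j. j < length P \<and> v \<in> P ! j \<inter> B} = incident_atoms P v" if "v \<in> B" for v
    using that unfolding incident_atoms_def by auto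
  then have "(\<forall>v\<in>B. (\<Sum>j | j < length P \<and> v \<in> P ! j \<inter> B. w j) \<ge> 1)
      \<longleftrightarrow> (\<forall>v\<in>B. (\<Sum>j\<in>incident_atoms P v. w j) \<ge> 1)" for w :: "nat \<Rightarrow> real"
    by simp
  then show ?thesis
    unfolding frac_edge_cover_def by simp
qed

lemma frac_edge_cover_dominated:
  assumes "\<forall>x\<in>B'. \<exists>y\<in>B. incident_atoms P y \<subseteq> incident_atoms P x"
  shows "frac_edge_cover P B' \<le> frac_edge_cover P B"
  unfolding frac_edge_cover_incident_atoms
proof (rule Inf_superset_mono, safe)
  fix w :: "nat \<Rightarrow> real"
  assume w_nonneg: "\<forall>j. 0 \<le> w j" and w_covers: "\<forall>v\<in>B. 1 \<le> (\<Sum>j\<in>incident_atoms P v. w j)"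
  have "1 \<le> (\<Sum>j\<in>incident_atoms P x. w j)" if "x \<in> B'" for x
  proof -
    obtain y where "y \<in> B" and dom: "incident_atoms P y \<subseteq> incident_atoms P x"
      using assms \<open>x \<in> B'\<close> by blast
    then have "1 \<le> (\<Sum>j\<in>incident_atoms P y. w j)"
      using w_covers by blast
    also have "\<dots> \<le> (\<Sum>j\<in>incident_atoms P x. w j)"
      using dom w_nonneg by (intro sum_mono2) auto
    finally show ?thesis .
  qed
  then show "\<exists>w'. ereal (sum w {..<length P}) = ereal (sum w' {..<length P}) \<and>
      (\<forall>j. 0 \<le> w' j) \<and> (\<forall>v\<in>B'. 1 \<le> (\<Sum>j\<in>incident_atoms P v. w' j))"
    using w_nonneg by blast
qed

text \<open>The cover number of B only depends on the set of incidence patterns of its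
variables, and there are finitely many such patterns.\<close>

lemma finite_range_frac_edge_cover: "finite (range (frac_edge_cover P))"
proof -
  define cover_of_patterns :: "nat set set \<Rightarrow> ereal" where
    "cover_of_patterns S = Inf {ereal (\<Sum>j<length P. w j) | w.
       (\<forall>j. w j \<ge> 0) \<and> (\<forall>s\<in>S. (\<Sum>j\<in>s. w j) \<ge> 1)}" for S
  have "frac_edge_cover P B = cover_of_patterns (incident_atoms P ` B)" for B
    unfolding frac_edge_cover_incident_atoms cover_of_patterns_def by simp
  moreover have "incident_atoms P ` B \<in> Pow (Pow {..<length P})" for B
    unfolding incident_atoms_def by auto
  ultimately have "range (frac_edge_cover P) \<subseteq> cover_of_patterns ` Pow (Pow {..<length P})"
    by blast
  then show ?thesis
    by (rule finite_subset) simp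
qed

lemma td_width_attained:
  assumes "is_tree_decomp P N E bag"
  shows "\<exists>t\<in>N. td_width P N bag = frac_edge_cover P (bag t)"
proof -
  have "finite N" "N \<noteq> {}"
    using assms unfolding is_tree_decomp_def is_tree_def by auto
  then have "td_width P N bag = Max ((\<lambda>t. frac_edge_cover P (bag t)) ` N)"
    unfolding td_width_def by (simp add: cSup_eq_Max)
  also have "\<dots> \<in> (\<lambda>t. frac_edge_cover P (bag t)) ` N"
    using \<open>finite N\<close> \<open>N \<noteq> {}\<close> by (intro Max_in) auto
  finally show ?thesis by blast
qed

lemma tw_attained: "\<exists>N E bag. is_tree_decomp P N E bag \<and> td_width P N bag = tw P"
proof -
  define W where "W = {td_width P N bag | N E bag. is_tree_decomp P N E bag}"
  have "is_tree_decomp P {0} {} (\<lambda>_. UNIV)"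
    unfolding is_tree_decomp_def is_tree_def connected_in_def by auto
  then have "W \<noteq> {}"
    unfolding W_def by blast
  have "W \<subseteq> range (frac_edge_cover P)"
    unfolding W_def using td_width_attained by fastforce
  then have "finite W"
    using finite_range_frac_edge_cover by (rule finite_subset)
  have "tw P = Inf W"
    unfolding tw_def W_def by simp
  also have "\<dots> = Min W"
    using \<open>finite W\<close> \<open>W \<noteq> {}\<close> by (simp add: cInf_eq_Min)
  also have "\<dots> \<in> W"
    using \<open>finite W\<close> \<open>W \<noteq> {}\<close> by (rule Min_in)
  finally have "tw P \<in> W" .
  then show ?thesis
    unfolding W_def by force
qed

lemma rtrancl_adj_within_mono:
  "(a, b) \<in> (adj_within E S)\<^sup>* \<Longrightarrow> S \<subseteq> S' \<Longrightarrow> (a, b) \<in> (adj_within E S')\<^sup>*"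
  using rtrancl_mono[of "adj_within E S" "adj_within E S'"] unfolding adj_within_def by blast

lemma connected_in_Un_UN:
  assumes A: "connected_in E A"
    and C: "\<And>l. l \<in> I \<Longrightarrow> connected_in E (C l) \<and> C l \<inter> A \<noteq> {}"
  shows "connected_in E (A \<union> (\<Union>l\<in>I. C l))"
proof -
  let ?U = "A \<union> (\<Union>l\<in>I. C l)"
  let ?R = "(adj_within E ?U)\<^sup>*"
  have linked_to_A: "\<exists>c\<in>A. (a, c) \<in> ?R \<and> (c, a) \<in> ?R" if "a \<in> ?U" for a
  proof (cases "a \<in> A")
    case True
    then show ?thesis by blast
  next
    case False
    then obtain l where l: "l \<in> I" "a \<in> C l"
      using \<open>a \<in> ?U\<close> by blast
    then obtain c where c: "c \<in> C l" "c \<in> A"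
      using C by blast
    have "(a, c) \<in> (adj_within E (C l))\<^sup>*" "(c, a) \<in> (adj_within E (C l))\<^sup>*"
      using C[OF l(1)] l c unfolding connected_in_def by blast+
    moreover have "C l \<subseteq> ?U"
      using l by blast
    ultimately show ?thesis
      using c rtrancl_adj_within_mono by metis
  qed
  show ?thesis
    unfolding connected_in_def
  proof (intro ballI)
    fix a b
    assume "a \<in> ?U" "b \<in> ?U"
    then obtain c d where "c \<in> A" "(a, c) \<in> ?R" "d \<in> A" "(d, b) \<in> ?R"
      using linked_to_A by meson
    moreover have "(c, d) \<in> ?R"
      using A \<open>c \<in> A\<close> \<open>d \<in> A\<close> rtrancl_adj_within_mono unfolding connected_in_def by blast
    ultimately show "(a, b) \<in> ?R"
      by (meson rtrancl_trans)
  qed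
qed

lemma atom_subset_domination_closure:
  assumes "j < length P" "P ! j \<subseteq> B"
  shows "P ! j \<subseteq> domination_closure P B"
  using assms unfolding domination_closure_def incident_atoms_def by blast

lemma connected_in_domination_closure:
  assumes td: "is_tree_decomp P N E bag"
  shows "connected_in E {t\<in>N. x \<in> domination_closure P (bag t)}"
proof (cases "incident_atoms P x = {}")
  case True
  then have "{t\<in>N. x \<in> domination_closure P (bag t)} = {}"
    unfolding domination_closure_def by auto
  then show ?thesis
    unfolding connected_in_def by (simp only: ball_empty)
next
  case False
  let ?dominators = "{y. incident_atoms P y \<noteq> {} \<and> incident_atoms P y \<subseteq> incident_atoms P x}"
  have subtree: "connected_in E {t\<in>N. y \<in> bag t}" for y
    using td unfolding is_tree_decomp_def by blast
  have "{t\<in>N. x \<in> domination_closure P (bag t)}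
      = {t\<in>N. x \<in> bag t} \<union> (\<Union>y\<in>?dominators. {t\<in>N. y \<in> bag t})"
    using False unfolding domination_closure_def by auto
  moreover have "connected_in E ({t\<in>N. x \<in> bag t} \<union> (\<Union>y\<in>?dominators. {t\<in>N. y \<in> bag t}))"
  proof (rule connected_in_Un_UN[OF subtree])
    fix y
    assume "y \<in> ?dominators"
    then obtain j where j: "j < length P" "y \<in> P ! j" "x \<in> P ! j"
      unfolding incident_atoms_def by blast
    then obtain t where "t \<in> N" "P ! j \<subseteq> bag t"
      using td unfolding is_tree_decomp_def by (meson nth_mem)
    then have "t \<in> {t\<in>N. y \<in> bag t} \<inter> {t\<in>N. x \<in> bag t}"
      using j by blast
    then show "connected_in E {t\<in>N. y \<in> bag t} \<and> {t\<in>N. y \<in> bag t} \<inter> {t\<in>N. x \<in> bag t} \<noteq> {}"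
      using subtree by blast
  qed
  ultimately show ?thesis
    by simp
qed

lemma is_tree_decomp_domination_closure:
  assumes td: "is_tree_decomp P N E bag"
  shows "is_tree_decomp P N E (\<lambda>t. domination_closure P (bag t))"
proof -
  have "\<exists>t\<in>N. S \<subseteq> domination_closure P (bag t)" if "S \<in> set P" for S
  proof -
    obtain j where "j < length P" "S = P ! j"
      using \<open>S \<in> set P\<close> by (metis in_set_conv_nth)
    moreover obtain t where "t \<in> N" "S \<subseteq> bag t"
      using td \<open>S \<in> set P\<close> unfolding is_tree_decomp_def by blast
    ultimately show ?thesis
      using atom_subset_domination_closure by blast
  qed
  then show ?thesis
    using td connected_in_domination_closure[OF td] unfolding is_tree_decomp_def by blast
qed

lemma td_width_domination_closure_le:
  "td_width P N (\<lambda>t. domination_closure P (bag t)) \<le> td_width P N bag"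
  unfolding td_width_def
  by (intro SUP_mono bexI[of _ t for t] frac_edge_cover_dominated)
    (auto simp: domination_closure_def)

lemma incident_atoms_mv_component_Inr:
  "incident_atoms (mv_component Q \<sigma>) (Inr i) = {i..<length Q}"
  unfolding incident_atoms_def mv_component_def by auto

lemma z_prefix_closed_domination_closure:
  "z_prefix_closed (domination_closure (mv_component Q \<sigma>) B)"
  unfolding z_prefix_closed_def
proof (intro allI impI)
  fix i j
  assume "Inr i \<in> domination_closure (mv_component Q \<sigma>) B" "j < i"
  moreover have "incident_atoms (mv_component Q \<sigma>) (Inr i)
      \<subseteq> incident_atoms (mv_component Q \<sigma>) (Inr j)"
    using \<open>j < i\<close> unfolding incident_atoms_mv_component_Inr by auto
  ultimately show "Inr j \<in> domination_closure (mv_component Q \<sigma>) B"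
    unfolding domination_closure_def by blast
qed

theorem mainTheorem14:
  fixes Q :: "'v query" and \<sigma> :: "nat \<Rightarrow> nat"
  assumes "\<forall>X\<in>set Q. finite X"
    and "\<sigma> permutes {..<length Q}"
  shows "\<exists>N E bag. is_tree_decomp (mv_component Q \<sigma>) N E bag
           \<and> td_width (mv_component Q \<sigma>) N bag = tw (mv_component Q \<sigma>)
           \<and> (\<forall>t\<in>N. z_prefix_closed (bag t))"
proof -
  define P where "P = mv_component Q \<sigma>"
  obtain N E bag where td: "is_tree_decomp P N E bag" and optimal: "td_width P N bag = tw P"
    using tw_attained by blast
  define closed_bag where "closed_bag t = domination_closure P (bag t)" for t
  have td_closed: "is_tree_decomp P N E closed_bag"
    unfolding closed_bag_def using td by (rule is_tree_decomp_domination_closure)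
  have "td_width P N closed_bag \<le> tw P"
    unfolding closed_bag_def optimal[symmetric] by (rule td_width_domination_closure_le)
  moreover have "tw P \<le> td_width P N closed_bag"
    unfolding tw_def using td_closed by (intro Inf_lower) blast
  ultimately have "td_width P N closed_bag = tw P"
    by (rule order_antisym)
  moreover have "z_prefix_closed (closed_bag t)" for t
    unfolding closed_bag_def P_def by (rule z_prefix_closed_domination_closure)
  ultimately show ?thesis
    using td_closed unfolding P_def by blast
qed

end
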